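(* Let $p$ be an odd prime and $n,k\geq 1$. The reduction map $\Phi:T(n,k)\to S(n,k)$, $\xi_i\mapsto t_i$, induces a homomorphism of May spectral sequences $\Phi:E_r^{*,*,*}T(n,k)\to E_r^{*,*,*}S(n,k)$ which on $E_1$-terms sends $h'_{i,j}$ to $h_{i,j}$ and $b'_{i,j}$ to $b_{i,j}$ (second index read modulo $n$). It sends infinite cocycles of $E_r^{*,*,*}T(n,k)$ to infinite cocycles of $E_r^{*,*,*}S(n,k)$.
   Context: $S(n,k)=\mathbb{Z}/p[t_k,t_{k+1},\dots]/(t_s^{p^n}-t_s)$ is the Hopf algebra with coproduct $\Delta(t_s)=1\otimes t_s+\sum_{k\leq i\leq s-k}t_i\otimes t_{s-i}^{p^i}+t_s\otimes 1$ for $s\leq n+k-1$, and this minus $b_{s-n,n-1}$ for $s\ge n+k$, where $b_{i,j}=\sum_{0<m<p}\binom{p}{m}/p\cdot t_i^{mp^j}\otimes t_i^{(p-m)p^j}$. Its May filtration: $M(t_s^{p^j})=2s-1$ for $k\leq s\leq n+k-1$, $M(t_s^{p^j})=\max\{2s-1,pM(t_{s-n}^{p^{j+n-1}})+1\}$ for $s\geq n+k$, extended to monomials by $M(t_s^{\sum j_ip^i})=\sum j_iM(t_s^{p^i})$ ($0\le j_i<p$), additively over distinct $t_s$, and to cobar elements by $M([\alpha_1|\cdots|\alpha_s])=\sum M(\alpha_i)$; this gives the May spectral sequence $E_r^{s,t,M}S(n,k)$ with $E_1=E[h_{i,j}]\otimes P[b_{i,j}]$ ($i\geq k$, $j\in\mathbb{Z}/n$),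 $h_{i,j}$ the class of $[t_i^{p^j}]$, $b_{i,j}$ the class of $b_{i,j}$. $T(n,k)=P[\xi_i\mid k\leq i\leq n+k-1]$ is the Hopf algebra with $|\xi_i|=2(p-1)(1+p+\cdots+p^{i-1})$ and $\Delta(\xi_i)=\xi_i\otimes 1+\sum_{k\leq r\leq i-k}\xi_r\otimes\xi_{i-r}^{p^r}+1\otimes \xi_i$. Its May filtration is $M(\xi_i^{p^j})=2i-1$, extended to monomials and cobar elements in the same way; the associated (May) spectral sequence $E_r^{s,t,M}T(n,k)$ has $E_1=E[h'_{i,j}\mid k\leq i\leq n+k-1,\ j\geq 0]\otimes P[b'_{i,j}\mid k\leq i\leq n+k-1,\ j\geq 0]$, with $h'_{i,j}$ the class of $[\xi_i^{p^j}]$ and $b'_{i,j}$ the class of $\sum_{0<m<p}\binom{p}{m}/p\ \xi_i^{mp^j}\otimes\xi_i^{(p-m)p^j}$. An infinite cocycle is an element of some $E_r$ on which all higher differentials $d_{r'}$, $r'\geq r$, vanish. *)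

theory Defs
  imports "HOL-Library.Poly_Mapping" "Berlekamp_Zassenhaus.Finite_Field"
begin

text \<open>An element of the s-fold tensor power of a (quotient of a)
polynomial algebra in generators t_i is modelled as a polynomial in variables (a,i),
meaning t_i placed in tensor slot a (a < s). A monomial of type mono thus is a
tensor of monomials; the empty slot stands for the unit 1.\<close>

type_synonym mono = "(nat \<times> nat) \<Rightarrow>\<^sub>0 nat"
type_synonym 'a coch = "mono \<Rightarrow>\<^sub>0 'a"

definition var :: "nat \<times> nat \<Rightarrow> 'a::comm_ring_1 coch" where
  "var v = Poly_Mapping.single (Poly_Mapping.single v 1) 1"

definition const :: "'a::comm_ring_1 \<Rightarrow> 'a coch" where
  "const c = Poly_Mapping.single 0 c"

definition subst :: "(nat \<times> nat \<Rightarrow> 'a::comm_ring_1 coch) \<Rightarrow> 'a coch \<Rightarrow> 'a coch" where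
  "subst \<sigma> x = (\<Sum>m\<in>Poly_Mapping.keys x. const (Poly_Mapping.lookup x m) * (\<Prod>v\<in>Poly_Mapping.keys m. \<sigma> v ^ Poly_Mapping.lookup m v))"

text \<open>Insert the coproduct D a i of t_i into slots a, a+1, shifting later slots.\<close>
definition delta_at :: "(nat \<Rightarrow> nat \<Rightarrow> 'a::comm_ring_1 coch) \<Rightarrow> nat \<Rightarrow> 'a coch \<Rightarrow> 'a coch" where
  "delta_at D a = subst (\<lambda>(b,i). if b < a then var (b,i) else if b = a then D a i else var (Suc b, i))"

text \<open>[1|x]: shift every slot by one.\<close>
definition shift1 :: "'a::comm_ring_1 coch \<Rightarrow> 'a coch" where
  "shift1 = subst (\<lambda>(b,i). var (Suc b, i))"

text \<open>Cobar differential on s-cochains (R is the normal-form map of the quotient):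
 d[x1|...|xs] = [1|x1|...|xs] + sum_a (-1)^(a+1) [...|Delta x_a|...] + (-1)^(s+1) [x1|...|xs|1].\<close>
definition cobar_d :: "('a::comm_ring_1 coch \<Rightarrow> 'a coch) \<Rightarrow> (nat \<Rightarrow> nat \<Rightarrow> 'a coch)
    \<Rightarrow> nat \<Rightarrow> 'a coch \<Rightarrow> 'a coch" where
  "cobar_d R D s x = R (shift1 x) + (\<Sum>a<s. (-1) ^ (a+1) * R (delta_at D a x)) + (-1) ^ (s+1) * x"

text \<open>Coproduct of t_i (resp. xi_i) in slots a, a+1 (1 (x) t_s is var (a+1,s)).\<close>
definition DeltaT :: "nat \<Rightarrow> nat \<Rightarrow> nat \<Rightarrow> nat \<Rightarrow> 'a::comm_ring_1 coch" where
  "DeltaT p k a s = var (Suc a, s) + (\<Sum>i\<in>{k..s-k}. var (a,i) * var (Suc a, s-i) ^ (p ^ i)) + var (a, s)"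

definition bpoly :: "nat \<Rightarrow> nat \<Rightarrow> nat \<Rightarrow> nat \<Rightarrow> 'a::comm_ring_1 coch" where
  "bpoly p a i j = (\<Sum>m\<in>{1..<p}. const (of_nat ((p choose m) div p))
      * var (a,i) ^ (m * p ^ j) * var (Suc a, i) ^ ((p - m) * p ^ j))"

definition DeltaS :: "nat \<Rightarrow> nat \<Rightarrow> nat \<Rightarrow> nat \<Rightarrow> nat \<Rightarrow> 'a::comm_ring_1 coch" where
  "DeltaS p n k a s = DeltaT p k a s - (if n + k \<le> s then bpoly p a (s - n) (n - 1) else 0)"

text \<open>Normal form in S(n,k): t^(q) = t with q = p^n, exponents reduced into {0..q-1}.\<close>
definition redexp :: "nat \<Rightarrow> nat \<Rightarrow> nat" where
  "redexp q e = (if e < q then e else (e - 1) mod (q - 1) + 1)"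

definition red :: "nat \<Rightarrow> 'a::comm_ring_1 coch \<Rightarrow> 'a coch" where
  "red q x = (\<Sum>m\<in>Poly_Mapping.keys x. Poly_Mapping.single (Poly_Mapping.map (redexp q) m) (Poly_Mapping.lookup x m))"

text \<open>Cobar complexes (normalized: every slot has positive degree).\<close>
definition CT :: "nat \<Rightarrow> nat \<Rightarrow> nat \<Rightarrow> 'a::comm_ring_1 coch set" where
  "CT n k s = {x. \<forall>m\<in>Poly_Mapping.keys x. (\<forall>(a,i)\<in>Poly_Mapping.keys m. a < s \<and> k \<le> i \<and> i < n + k)
                               \<and> (\<forall>a<s. \<exists>i. (a,i) \<in> Poly_Mapping.keys m)}"

definition CS :: "nat \<Rightarrow> nat \<Rightarrow> nat \<Rightarrow> nat \<Rightarrow> 'a::comm_ring_1 coch set" where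
  "CS p n k s = {x. \<forall>m\<in>Poly_Mapping.keys x. (\<forall>(a,i)\<in>Poly_Mapping.keys m. a < s \<and> k \<le> i \<and> Poly_Mapping.lookup m (a,i) < p ^ n)
                               \<and> (\<forall>a<s. \<exists>i. (a,i) \<in> Poly_Mapping.keys m)}"

definition dT :: "nat \<Rightarrow> nat \<Rightarrow> nat \<Rightarrow> 'a::comm_ring_1 coch \<Rightarrow> 'a coch" where
  "dT p k = cobar_d id (DeltaT p k)"

definition dS :: "nat \<Rightarrow> nat \<Rightarrow> nat \<Rightarrow> nat \<Rightarrow> 'a::comm_ring_1 coch \<Rightarrow> 'a coch" where
  "dS p n k = cobar_d (red (p ^ n)) (DeltaS p n k)"

definition digit :: "nat \<Rightarrow> nat \<Rightarrow> nat \<Rightarrow> nat" where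
  "digit p e j = (e div p ^ j) mod p"

definition MT :: "nat \<Rightarrow> mono \<Rightarrow> nat" where
  "MT p m = (\<Sum>(a,i)\<in>Poly_Mapping.keys m. (2 * i - 1) * (\<Sum>j\<le>Poly_Mapping.lookup m (a,i). digit p (Poly_Mapping.lookup m (a,i)) j))"

text \<open>Mval p n k s j = M(t_s^(p^j)) in S(n,k), for j < n.\<close>
function Mval :: "nat \<Rightarrow> nat \<Rightarrow> nat \<Rightarrow> nat \<Rightarrow> nat \<Rightarrow> nat" where
  "Mval p n k s j = (if n = 0 \<or> s < n + k then 2 * s - 1
      else max (2 * s - 1) (p * Mval p n k (s - n) ((j + n - 1) mod n) + 1))"
  by pat_completeness auto
termination by (relation "measure (\<lambda>(p,n,k,s,j). s)") auto

definition MS :: "nat \<Rightarrow> nat \<Rightarrow> nat \<Rightarrow> mono \<Rightarrow> nat" where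
  "MS p n k m = (\<Sum>(a,i)\<in>Poly_Mapping.keys m. \<Sum>j<n. digit p (Poly_Mapping.lookup m (a,i)) j * Mval p n k i j)"

text \<open>Spectral sequence of the increasing filtration F_w = span of basis tensors of
May filtration at most w. Z_r = {x in F_w : dx in F_(w-r)},
B_r = Z_(r-1)^(w-1) + d Z_(r-1)^(w+r-1), E_r = Z_r / B_r (r \<ge> 1), d_r : E_r^w \<rightarrow> E_r^(w-r).\<close>
definition filt :: "(nat \<Rightarrow> 'a::comm_ring_1 coch set) \<Rightarrow> (mono \<Rightarrow> nat) \<Rightarrow> nat \<Rightarrow> int \<Rightarrow> 'a coch set" where
  "filt C M s w = {x \<in> C s. \<forall>m\<in>Poly_Mapping.keys x. int (M m) \<le> w}"

definition ZZ :: "(nat \<Rightarrow> 'a::comm_ring_1 coch set) \<Rightarrow> (mono \<Rightarrow> nat) \<Rightarrow> (nat \<Rightarrow> 'a coch \<Rightarrow> 'a coch)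
    \<Rightarrow> nat \<Rightarrow> nat \<Rightarrow> int \<Rightarrow> 'a coch set" where
  "ZZ C M d r s w = {x \<in> filt C M s w. d s x \<in> filt C M (Suc s) (w - int r)}"

definition BB :: "(nat \<Rightarrow> 'a::comm_ring_1 coch set) \<Rightarrow> (mono \<Rightarrow> nat) \<Rightarrow> (nat \<Rightarrow> 'a coch \<Rightarrow> 'a coch)
    \<Rightarrow> nat \<Rightarrow> nat \<Rightarrow> int \<Rightarrow> 'a coch set" where
  "BB C M d r s w = {y + z | y z. y \<in> ZZ C M d (r - 1) s (w - 1) \<and>
      (z = 0 \<or> (\<exists>s' u. s = Suc s' \<and> u \<in> ZZ C M d (r - 1) s' (w + int r - 1) \<and> z = d s' u))}"

text \<open>x \<in> Z_r represents an infinite cocycle of E_r: its class survives to every E_r', r' \<ge> r,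
 i.e. all d_r' (r' \<ge> r) vanish on it.\<close>
definition inf_cocycle :: "(nat \<Rightarrow> 'a::comm_ring_1 coch set) \<Rightarrow> (mono \<Rightarrow> nat) \<Rightarrow> (nat \<Rightarrow> 'a coch \<Rightarrow> 'a coch)
    \<Rightarrow> nat \<Rightarrow> nat \<Rightarrow> int \<Rightarrow> 'a coch \<Rightarrow> bool" where
  "inf_cocycle C M d r s w x \<longleftrightarrow> x \<in> ZZ C M d r s w \<and>
      (\<forall>r'\<ge>r. \<exists>z\<in>ZZ C M d r' s w. x - z \<in> BB C M d r s w)"

text \<open>Representing 1-cochains of h_{i,j} = [t_i^(p^j)] and b_{i,j}.\<close>
definition hcoch :: "nat \<Rightarrow> nat \<Rightarrow> nat \<Rightarrow> 'a::comm_ring_1 coch" where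
  "hcoch p i j = var (0,i) ^ (p ^ j)"

definition bcoch :: "nat \<Rightarrow> nat \<Rightarrow> nat \<Rightarrow> 'a::comm_ring_1 coch" where
  "bcoch p i j = bpoly p 0 i j"

end

theory Submission
  imports Defs "Berlekamp_Zassenhaus.Berlekamp_Type_Based"
begin

text \<open>Write q = p^n.
Over F_p the Frobenius gives b^q \<equiv> b modulo the relations t^q = t for every cochain b, so
red q is multiplicative modulo itself and commutes with substitutions. The coproducts of
T(n,k) and S(n,k) agree on the generators of index i < n + k, the only ones occurring in
T(n,k) (the correction b_{s-n,n-1} only enters for s \<ge> n + k); hence red q is a cochain map.
It does not raise May filtration: for i < n + k both filtrations weigh a factor t_i^e by 2i - 1
times the base-p digit sum of e, and reducing e modulo p^n - 1 does not increase that digit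
sum. A filtered cochain map sends Z_r into Z_r and B_r into B_r, hence infinite cocycles to
infinite cocycles.\<close>

definition pm_extend :: "('k \<Rightarrow> 'a::zero \<Rightarrow> 'b::ab_group_add) \<Rightarrow> ('k \<Rightarrow>\<^sub>0 'a) \<Rightarrow> 'b" where
  "pm_extend F x = (\<Sum>m\<in>Poly_Mapping.keys x. F m (Poly_Mapping.lookup x m))"

definition coeff_additive :: "('k \<Rightarrow> 'a::monoid_add \<Rightarrow> 'b::ab_group_add) \<Rightarrow> bool" where
  "coeff_additive F \<longleftrightarrow> (\<forall>m a b. F m (a + b) = F m a + F m b)"

lemma coeff_additive_zero: "coeff_additive F \<Longrightarrow> F m 0 = 0"
  unfolding coeff_additive_def by (metis add_cancel_right_right add_0)

lemma pm_extend_superset: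
  assumes "finite S" "Poly_Mapping.keys x \<subseteq> S" "\<And>m. F m 0 = 0"
  shows "pm_extend F x = (\<Sum>m\<in>S. F m (Poly_Mapping.lookup x m))"
  unfolding pm_extend_def by (rule sum.mono_neutral_left) (auto simp: in_keys_iff assms)

lemma pm_extend_add:
  assumes "coeff_additive F"
  shows "pm_extend F (x + y) = pm_extend F x + pm_extend F y"
proof -
  let ?S = "Poly_Mapping.keys x \<union> Poly_Mapping.keys y"
  have zero: "\<And>m. F m 0 = 0" using coeff_additive_zero[OF assms] .
  have "pm_extend F (x + y) = (\<Sum>m\<in>?S. F m (Poly_Mapping.lookup (x + y) m))"
    using keys_add[of x y] zero by (intro pm_extend_superset) auto
  also have "\<dots> = (\<Sum>m\<in>?S. F m (Poly_Mapping.lookup x m) + F m (Poly_Mapping.lookup y m))"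
    using assms by (simp add: lookup_add coeff_additive_def)
  also have "\<dots> = pm_extend F x + pm_extend F y"
    by (simp add: sum.distrib pm_extend_superset[where S = ?S] zero)
  finally show ?thesis .
qed

lemma pm_extend_zero: "pm_extend F 0 = 0"
  by (simp add: pm_extend_def)

lemma pm_extend_single: "F m 0 = 0 \<Longrightarrow> pm_extend F (Poly_Mapping.single m c) = F m c"
  by (simp add: pm_extend_def)

lemma pm_extend_sum: "coeff_additive F \<Longrightarrow> pm_extend F (sum g A) = (\<Sum>a\<in>A. pm_extend F (g a))"
  by (induct A rule: infinite_finite_induct) (auto simp: pm_extend_zero pm_extend_add)

lemma pm_extend_diff:
  fixes F :: "'k \<Rightarrow> 'a::ab_group_add \<Rightarrow> 'b::ab_group_add"
  assumes "coeff_additive F"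
  shows "pm_extend F (x - y) = pm_extend F x - pm_extend F y"
  using pm_extend_add[OF assms, of "x - y" y] by (simp add: algebra_simps)

lemma poly_mapping_sum_single:
  "x = (\<Sum>m\<in>Poly_Mapping.keys x. Poly_Mapping.single m (Poly_Mapping.lookup x m))"
  by (rule poly_mapping_eqI)
    (auto simp: lookup_sum lookup_single when_def in_keys_iff intro: sum.neutral
      simp del: sum.neutral_const cong: if_cong)

lemma single_mult_eq_sum:
  "Poly_Mapping.single m c * y =
    (\<Sum>m'\<in>Poly_Mapping.keys y. Poly_Mapping.single (m + m') (c * Poly_Mapping.lookup y m'))"
  by (subst poly_mapping_sum_single[of y]) (simp add: sum_distrib_left mult_single)

lemma single_eq_0_iff: "Poly_Mapping.single k v = 0 \<longleftrightarrow> v = 0"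
  by (metis lookup_single_eq single_zero lookup_zero)

lemma single_power:
  "Poly_Mapping.single m c ^ e = Poly_Mapping.single (Poly_Mapping.map (\<lambda>k. e * k) m) (c ^ e)"
proof (induct e)
  case 0
  have "Poly_Mapping.map (\<lambda>_. 0::nat) m = 0" by (rule poly_mapping_eqI) (simp add: map.rep_eq)
  then show ?case by simp
next
  case (Suc e)
  have "m + Poly_Mapping.map (\<lambda>k. e * k) m = Poly_Mapping.map (\<lambda>k. Suc e * k) m"
    by (rule poly_mapping_eqI) (simp add: map.rep_eq lookup_add when_def)
  then show ?case using Suc by (simp add: mult_single)
qed

definition subst_monomial :: "(nat \<times> nat \<Rightarrow> 'a::comm_ring_1 coch) \<Rightarrow> mono \<Rightarrow> 'a coch" where
  "subst_monomial \<sigma> m = (\<Prod>v\<in>Poly_Mapping.keys m. \<sigma> v ^ Poly_Mapping.lookup m v)"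

lemma const_add: "const (a + b) = const a + const b"
  by (simp add: const_def single_add)

lemma const_zero [simp]: "const 0 = 0"
  by (simp add: const_def)

lemma subst_eq_pm_extend: "subst \<sigma> = pm_extend (\<lambda>m c. const c * subst_monomial \<sigma> m)"
  by (simp add: fun_eq_iff subst_def pm_extend_def subst_monomial_def)

lemma coeff_additive_subst: "coeff_additive (\<lambda>m c. const c * subst_monomial \<sigma> m)"
  by (simp add: coeff_additive_def const_add distrib_right)

lemma subst_sum_single:
  "subst \<sigma> (\<Sum>m\<in>A. Poly_Mapping.single (h m) (c m)) = (\<Sum>m\<in>A. const (c m) * subst_monomial \<sigma> (h m))"
  by (simp add: subst_eq_pm_extend pm_extend_sum coeff_additive_subst pm_extend_single)

lemma var_power: "(var v :: 'a::comm_ring_1 coch) ^ e = Poly_Mapping.single (Poly_Mapping.single v e) 1"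
  unfolding var_def single_power by simp

lemma const_mult_var_powers:
  "const c * (var v :: 'a::comm_ring_1 coch) ^ a * var w ^ b =
    Poly_Mapping.single (Poly_Mapping.single v a + Poly_Mapping.single w b) c"
  unfolding var_power const_def by (simp add: mult_single)

lemma prime_card_ge_2: "2 \<le> CARD('p::prime_card)"
  using prime_card prime_ge_2_nat by blast

lemma CHAR_coch: "CHAR('a::comm_ring_1 coch) = CHAR('a)"
  unfolding semiring_char_def of_nat_single o_apply single_eq_0_iff ..

section \<open>Reduction of exponents\<close>

lemma power_ge_2: "2 \<le> p \<Longrightarrow> 1 \<le> n \<Longrightarrow> 2 \<le> (p::nat) ^ n"
  using self_le_power[of p n] by simp

lemma redexp_0 [simp]: "0 < q \<Longrightarrow> redexp q 0 = 0"
  by (simp add: redexp_def)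

lemma redexp_eq_if: "2 \<le> q \<Longrightarrow> redexp q e = (if e = 0 then 0 else (e - 1) mod (q - 1) + 1)"
  by (auto simp: redexp_def)

lemma redexp_small: "e < q \<Longrightarrow> redexp q e = e"
  by (simp add: redexp_def)

lemma redexp_less:
  assumes "2 \<le> q" shows "redexp q e < q"
proof -
  have "(e - 1) mod (q - 1) < q - 1" using assms by simp
  then have "(e - 1) mod (q - 1) + 1 < q" by linarith
  then show ?thesis by (simp add: redexp_def)
qed

lemma redexp_eq_0_iff: "2 \<le> q \<Longrightarrow> redexp q e = 0 \<longleftrightarrow> e = 0"
  by (simp add: redexp_eq_if)

lemma cong_redexp: "2 \<le> q \<Longrightarrow> [redexp q e = e] (mod (q - 1))"
proof (cases "e = 0")
  case False
  assume q: "2 \<le> q"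
  have "[(e - 1) mod (q - 1) + 1 = e - 1 + 1] (mod (q - 1))"
    by (intro cong_add) simp_all
  then show ?thesis using q False by (simp add: redexp_eq_if)
qed simp

lemma redexp_cong:
  assumes "2 \<le> q" "e \<noteq> 0" "e' \<noteq> 0" "[e = e'] (mod (q - 1))"
  shows "redexp q e = redexp q e'"
proof -
  have "[e - 1 + 1 = e' - 1 + 1] (mod (q - 1))" using assms(2-4) by simp
  then have "[e - 1 = e' - 1] (mod (q - 1))" by (rule iffD1[OF cong_add_rcancel_nat])
  then show ?thesis using assms(1-3) by (simp add: redexp_eq_if cong_def)
qed

lemma cong_modulus_0: "[m = 0] (mod m)"
  by (simp add: cong_0_iff)

lemma cong_self_one:
  fixes q :: nat
  assumes "1 \<le> q" shows "[q = 1] (mod (q - 1))"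
proof -
  have "[q - 1 + 1 = 0 + 1] (mod (q - 1))" by (intro cong_add cong_refl cong_modulus_0)
  moreover have "q - 1 + 1 = q" using assms by simp
  ultimately show ?thesis by simp
qed

lemma redexp_add_left:
  assumes q: "2 \<le> q" shows "redexp q (a + b) = redexp q (redexp q a + b)"
proof (cases "a = 0")
  case False
  have "[a + b = redexp q a + b] (mod (q - 1))"
    using q by (intro cong_add cong_sym[OF cong_redexp]) simp_all
  then show ?thesis using q False by (intro redexp_cong) (simp_all add: redexp_eq_0_iff)
qed (use q in simp)

lemma redexp_power_mult: assumes q: "2 \<le> q" shows "redexp q (q ^ t * e) = redexp q e"
proof (cases "e = 0")
  case False
  have "[q ^ t * e = 1 ^ t * e] (mod (q - 1))"
    using q by (intro cong_mult cong_pow cong_self_one) simp_all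
  then show ?thesis using q False by (intro redexp_cong) simp_all
qed simp

lemma redexp_ge: assumes q: "2 \<le> q" "q \<le> e" shows "redexp q e = redexp q (e - q + 1)"
proof (rule redexp_cong)
  have "[(e - q + 1) + (q - 1) = (e - q + 1) + 0] (mod (q - 1))"
    by (intro cong_add cong_refl cong_modulus_0)
  then show "[e = e - q + 1] (mod (q - 1))" using q by simp
qed (use q in simp_all)

lemma redexp_digit_power:
  assumes p: "2 \<le> p" and n: "1 \<le> n" and c: "c < p"
  shows "redexp (p ^ n) (c * p ^ j) = c * p ^ (j mod n)"
proof -
  have q: "2 \<le> p ^ n" using power_ge_2[OF p n] .
  have "p ^ j = p ^ (n * (j div n) + j mod n)" by simp
  also have "\<dots> = (p ^ n) ^ (j div n) * p ^ (j mod n)" by (simp only: power_add power_mult)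
  finally have "p ^ j = (p ^ n) ^ (j div n) * p ^ (j mod n)" .
  then have "c * p ^ j = (p ^ n) ^ (j div n) * (c * p ^ (j mod n))"
    by (simp add: ac_simps)
  then have "redexp (p ^ n) (c * p ^ j) = redexp (p ^ n) (c * p ^ (j mod n))"
    by (simp only: redexp_power_mult[OF q])
  also have "\<dots> = c * p ^ (j mod n)"
  proof (rule redexp_small)
    have "c * p ^ (j mod n) < p ^ Suc (j mod n)" using c p by simp
    also have "\<dots> \<le> p ^ n" using p n by (intro power_increasing) (simp_all add: Suc_le_eq)
    finally show "c * p ^ (j mod n) < p ^ n" .
  qed
  finally show ?thesis .
qed

lemma red_eq_pm_extend: "red q = pm_extend (\<lambda>m. Poly_Mapping.single (Poly_Mapping.map (redexp q) m))"
  by (simp add: fun_eq_iff red_def pm_extend_def)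

lemma coeff_additive_red: "coeff_additive (\<lambda>m. Poly_Mapping.single (Poly_Mapping.map (redexp q) m))"
  by (simp add: coeff_additive_def single_add)

lemma red_add: "red q (x + y) = red q x + red q y"
  by (simp add: red_eq_pm_extend pm_extend_add coeff_additive_red)

lemma red_diff: "red q (x - y) = red q x - red q y"
  by (simp add: red_eq_pm_extend pm_extend_diff coeff_additive_red)

lemma red_zero: "red q 0 = 0"
  by (simp add: red_eq_pm_extend pm_extend_zero)

lemma red_sum: "red q (sum g A) = (\<Sum>a\<in>A. red q (g a))"
  by (simp add: red_eq_pm_extend pm_extend_sum coeff_additive_red)

lemma red_single: "red q (Poly_Mapping.single m c) = Poly_Mapping.single (Poly_Mapping.map (redexp q) m) c"
  by (simp add: red_eq_pm_extend pm_extend_single)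

lemma red_sign_mult: "red q ((-1) ^ k * y) = (-1) ^ k * red q y"
  using red_diff[of q 0 y] by (cases "even k") (simp_all add: red_zero)

lemma keys_red_subset: "Poly_Mapping.keys (red q x) \<subseteq> Poly_Mapping.map (redexp q) ` Poly_Mapping.keys x"
  unfolding red_def by (rule order_trans[OF keys_sum]) (auto split: if_splits)

lemma lookup_map_redexp:
  "2 \<le> q \<Longrightarrow> Poly_Mapping.lookup (Poly_Mapping.map (redexp q) m) v = redexp q (Poly_Mapping.lookup m v)"
  by (simp add: map.rep_eq when_def redexp_eq_if)

lemma keys_map_redexp: "2 \<le> q \<Longrightarrow> Poly_Mapping.keys (Poly_Mapping.map (redexp q) m) = Poly_Mapping.keys m"
  by (auto simp: in_keys_iff lookup_map_redexp redexp_eq_if split: if_splits)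

lemma map_redexp_add_left:
  assumes q: "2 \<le> q"
  shows "Poly_Mapping.map (redexp q) (m1 + m2) = Poly_Mapping.map (redexp q) (Poly_Mapping.map (redexp q) m1 + m2)"
proof (rule poly_mapping_eqI)
  fix v
  show "Poly_Mapping.lookup (Poly_Mapping.map (redexp q) (m1 + m2)) v =
      Poly_Mapping.lookup (Poly_Mapping.map (redexp q) (Poly_Mapping.map (redexp q) m1 + m2)) v"
    using redexp_add_left[OF q, of "Poly_Mapping.lookup m1 v" "Poly_Mapping.lookup m2 v"]
    by (simp add: lookup_map_redexp[OF q] lookup_add)
qed

lemma red_mult_left: assumes q: "2 \<le> q" shows "red q (x * y) = red q (red q x * y)"
proof -
  let ?t = "\<lambda>m. Poly_Mapping.single m (Poly_Mapping.lookup x m)"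
  have single: "red q (Poly_Mapping.single m c * y) =
      red q (Poly_Mapping.single (Poly_Mapping.map (redexp q) m) c * y)" for m c
    by (simp only: single_mult_eq_sum red_sum red_single map_redexp_add_left[OF q, symmetric])
  have "x * y = (\<Sum>m\<in>Poly_Mapping.keys x. ?t m) * y"
    by (rule arg_cong[OF poly_mapping_sum_single])
  then have "red q (x * y) = (\<Sum>m\<in>Poly_Mapping.keys x. red q (?t m * y))"
    by (simp only: sum_distrib_right red_sum)
  also have "\<dots> = (\<Sum>m\<in>Poly_Mapping.keys x.
      red q (Poly_Mapping.single (Poly_Mapping.map (redexp q) m) (Poly_Mapping.lookup x m) * y))"
    by (rule sum.cong[OF refl single])
  also have "\<dots> = red q (red q x * y)"
    by (simp only: red_def[of q x] sum_distrib_right red_sum)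
  finally show ?thesis .
qed

lemma red_mult_right: "2 \<le> q \<Longrightarrow> red q (x * y) = red q (x * red q y)"
  by (metis mult.commute red_mult_left)

lemma red_prod: assumes q: "2 \<le> q" shows "red q (\<Prod>v\<in>S. a v) = red q (\<Prod>v\<in>S. red q (a v))"
proof (induct S rule: infinite_finite_induct)
  case (insert v S)
  then have "red q (\<Prod>v\<in>insert v S. a v) = red q (red q (a v) * red q (\<Prod>v\<in>S. red q (a v)))"
    using red_mult_left[OF q] red_mult_right[OF q] by (metis prod.insert)
  also have "\<dots> = red q (red q (a v) * (\<Prod>v\<in>S. red q (a v)))"
    by (rule red_mult_right[OF q, symmetric])
  also have "\<dots> = red q (\<Prod>v\<in>insert v S. red q (a v))"
    using insert by simp
  finally show ?case .
qed simp_all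

lemma red_const_mult: "red q (const c * y) = const c * red q y"
proof -
  have "red q (const c * y) = (\<Sum>m\<in>Poly_Mapping.keys y.
      Poly_Mapping.single (Poly_Mapping.map (redexp q) m) (c * Poly_Mapping.lookup y m))"
    by (simp add: const_def single_mult_eq_sum red_sum red_single)
  also have "\<dots> = const c * red q y"
    by (simp add: red_def const_def sum_distrib_left mult_single)
  finally show ?thesis .
qed

lemma red_power_redexp:
  assumes q: "2 \<le> q" and frob: "red q (b ^ q) = red q b"
  shows "red q (b ^ e) = red q (b ^ redexp q e)"
proof (induct e rule: less_induct)
  case (less e)
  show ?case
  proof (cases "e < q")
    case True then show ?thesis by (simp add: redexp_small)
  next
    case False
    then have "red q (b ^ e) = red q (b ^ q * b ^ (e - q))" by (simp flip: power_add)
    also have "\<dots> = red q (b ^ (e - q + 1))"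
      using red_mult_left[OF q, of "b ^ q"] red_mult_left[OF q, of b] frob by simp
    also have "\<dots> = red q (b ^ redexp q e)"
      using less[of "e - q + 1"] redexp_ge[OF q] q False by simp
    finally show ?thesis .
  qed
qed

lemma red_power_frobenius:
  fixes b :: "'a::comm_ring_1 coch"
  assumes char: "prime CHAR('a)" and n: "1 \<le> n" and frob: "\<And>c::'a. c ^ (CHAR('a) ^ n) = c"
  shows "red (CHAR('a) ^ n) (b ^ (CHAR('a) ^ n)) = red (CHAR('a) ^ n) b"
proof -
  let ?q = "CHAR('a) ^ n"
  have q: "2 \<le> ?q" using power_ge_2[OF prime_ge_2_nat[OF char] n] .
  have "b ^ ?q = (\<Sum>m\<in>Poly_Mapping.keys b. Poly_Mapping.single m (Poly_Mapping.lookup b m)) ^ ?q"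
    by (rule arg_cong[OF poly_mapping_sum_single])
  also have "\<dots> = (\<Sum>m\<in>Poly_Mapping.keys b. Poly_Mapping.single m (Poly_Mapping.lookup b m) ^ ?q)"
    by (rule freshmans_dream_sum') (simp_all add: CHAR_coch char)
  also have "\<dots> = (\<Sum>m\<in>Poly_Mapping.keys b.
      Poly_Mapping.single (Poly_Mapping.map (\<lambda>k. ?q * k) m) (Poly_Mapping.lookup b m))"
    by (simp add: single_power frob)
  finally have "red ?q (b ^ ?q) = (\<Sum>m\<in>Poly_Mapping.keys b.
      Poly_Mapping.single (Poly_Mapping.map (redexp ?q) (Poly_Mapping.map (\<lambda>k. ?q * k) m))
        (Poly_Mapping.lookup b m))"
    by (simp only: red_sum red_single)
  also have "\<dots> = red ?q b"
    unfolding red_def using q redexp_power_mult[OF q, of 1] prime_gt_0_nat[OF char]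
    by (intro sum.cong refl arg_cong2[where f = Poly_Mapping.single] poly_mapping_eqI)
      (simp add: lookup_map_redexp map.rep_eq when_def)
  finally show ?thesis .
qed

lemma power_card_power_mod_ring: "(c::'p::prime_card mod_ring) ^ (CARD('p) ^ n) = c"
  by (induct n) (simp_all add: power_mult)

lemma red_power_card_power:
  fixes b :: "'p::prime_card mod_ring coch"
  shows "1 \<le> n \<Longrightarrow> red (CARD('p) ^ n) (b ^ (CARD('p) ^ n)) = red (CARD('p) ^ n) b"
  using red_power_frobenius[of n b] prime_card[where 'a = 'p] power_card_power_mod_ring[where 'p = 'p]
  by simp

lemma red_subst_monomial:
  fixes \<sigma> \<tau> :: "nat \<times> nat \<Rightarrow> 'a::comm_ring_1 coch"
  assumes q: "2 \<le> q" and frob: "\<And>b::'a coch. red q (b ^ q) = red q b"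
    and agree: "\<And>v. v \<in> Poly_Mapping.keys m \<Longrightarrow> \<sigma> v = \<tau> v"
  shows "red q (subst_monomial \<sigma> (Poly_Mapping.map (redexp q) m)) = red q (subst_monomial \<tau> m)"
proof -
  have "subst_monomial \<sigma> (Poly_Mapping.map (redexp q) m) =
      (\<Prod>v\<in>Poly_Mapping.keys m. \<tau> v ^ redexp q (Poly_Mapping.lookup m v))"
    unfolding subst_monomial_def keys_map_redexp[OF q] using agree
    by (intro prod.cong) (simp_all add: lookup_map_redexp[OF q])
  then have "red q (subst_monomial \<sigma> (Poly_Mapping.map (redexp q) m)) =
      red q (\<Prod>v\<in>Poly_Mapping.keys m. red q (\<tau> v ^ redexp q (Poly_Mapping.lookup m v)))"
    using red_prod[OF q] by simp
  also have "\<dots> = red q (\<Prod>v\<in>Poly_Mapping.keys m. red q (\<tau> v ^ Poly_Mapping.lookup m v))"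
    by (simp only: red_power_redexp[OF q frob, symmetric])
  also have "\<dots> = red q (subst_monomial \<tau> m)"
    unfolding subst_monomial_def by (rule red_prod[OF q, symmetric])
  finally show ?thesis .
qed

lemma red_subst_red:
  fixes \<sigma> \<tau> :: "nat \<times> nat \<Rightarrow> 'a::comm_ring_1 coch"
  assumes q: "2 \<le> q" and frob: "\<And>b::'a coch. red q (b ^ q) = red q b"
    and agree: "\<And>m v. m \<in> Poly_Mapping.keys x \<Longrightarrow> v \<in> Poly_Mapping.keys m \<Longrightarrow> \<sigma> v = \<tau> v"
  shows "red q (subst \<sigma> (red q x)) = red q (subst \<tau> x)"
proof -
  have "red q (subst \<sigma> (red q x)) = (\<Sum>m\<in>Poly_Mapping.keys x.
      const (Poly_Mapping.lookup x m) * red q (subst_monomial \<sigma> (Poly_Mapping.map (redexp q) m)))"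
    unfolding red_def[of q x] subst_sum_single by (simp add: red_sum red_const_mult)
  also have "\<dots> = (\<Sum>m\<in>Poly_Mapping.keys x. const (Poly_Mapping.lookup x m) * red q (subst_monomial \<tau> m))"
    using red_subst_monomial[OF q frob agree] by simp
  also have "\<dots> = red q (subst \<tau> x)"
    by (simp add: subst_eq_pm_extend pm_extend_def red_sum red_const_mult)
  finally show ?thesis .
qed

section \<open>The reduction is a cochain map\<close>

lemma red_CT_in_CS:
  assumes q: "2 \<le> p ^ n" and x: "x \<in> CT n k s"
  shows "red (p ^ n) x \<in> CS p n k s"
  unfolding CS_def
proof (intro CollectI ballI)
  fix m' assume "m' \<in> Poly_Mapping.keys (red (p ^ n) x)"
  then obtain m where m: "m \<in> Poly_Mapping.keys x" and m': "m' = Poly_Mapping.map (redexp (p ^ n)) m"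
    using keys_red_subset by blast
  have "Poly_Mapping.keys m' = Poly_Mapping.keys m"
    unfolding m' using keys_map_redexp[OF q] .
  then show "(\<forall>(a, i)\<in>Poly_Mapping.keys m'. a < s \<and> k \<le> i \<and> Poly_Mapping.lookup m' (a, i) < p ^ n) \<and>
      (\<forall>a<s. \<exists>i. (a, i) \<in> Poly_Mapping.keys m')"
    using x m by (auto simp: CT_def m' lookup_map_redexp[OF q] redexp_less[OF q])
qed

lemma red_dT_eq_dS_red:
  fixes x :: "'p::prime_card mod_ring coch"
  assumes n: "1 \<le> n" and x: "x \<in> CT n k s"
  shows "red (CARD('p) ^ n) (dT (CARD('p)) k s x) = dS (CARD('p)) n k s (red (CARD('p) ^ n) x)"
proof -
  let ?q = "CARD('p) ^ n"
  have q: "2 \<le> ?q" using power_ge_2[OF prime_card_ge_2 n] .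
  note frob = red_power_card_power[OF n]
  have shift: "red ?q (shift1 (red ?q x)) = red ?q (shift1 x)"
    unfolding shift1_def by (rule red_subst_red[OF q frob]) simp
  have delta: "red ?q (delta_at (DeltaS (CARD('p)) n k) a (red ?q x)) =
      red ?q (delta_at (DeltaT (CARD('p)) k) a x)" for a
    unfolding delta_at_def
  proof (rule red_subst_red[OF q frob])
    fix m v assume "m \<in> Poly_Mapping.keys x" "v \<in> Poly_Mapping.keys m"
    then have "snd v < n + k" using x unfolding CT_def by (cases v) fastforce
    then show "(\<lambda>(b, i). if b < a then var (b, i) else if b = a then DeltaS (CARD('p)) n k a i else var (Suc b, i)) v =
        (\<lambda>(b, i). if b < a then var (b, i) else if b = a then DeltaT (CARD('p)) k a i else var (Suc b, i)) v"
      by (auto simp: DeltaS_def split: prod.split)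
  qed
  show ?thesis
    unfolding dT_def dS_def cobar_d_def id_def
    by (simp only: red_add red_sum red_sign_mult shift delta)
qed

section \<open>Digit sums and the May filtration\<close>

function digit_sum :: "nat \<Rightarrow> nat \<Rightarrow> nat" where
  "digit_sum p e = (if p < 2 \<or> e = 0 then 0 else e mod p + digit_sum p (e div p))"
  by pat_completeness auto
termination by (relation "measure (\<lambda>(p, e). e)") auto

declare digit_sum.simps [simp del]

lemma digit_sum_0 [simp]: "digit_sum p 0 = 0"
  by (simp add: digit_sum.simps)

lemma digit_sum_rec: "2 \<le> p \<Longrightarrow> digit_sum p e = e mod p + digit_sum p (e div p)"
  by (cases "e = 0") (simp_all add: digit_sum.simps[of p e])

lemma digit_sum_le: "digit_sum p e \<le> e"
proof (induct e rule: less_induct)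
  case (less e)
  show ?case
  proof (cases "p < 2 \<or> e = 0")
    case False
    then have "digit_sum p (e div p) \<le> e div p" using less by simp
    moreover have "e div p \<le> p * (e div p)" using False by simp
    ultimately show ?thesis
      using False digit_sum_rec[of p e] mod_mult_div_eq[of e p] by linarith
  qed (auto simp: digit_sum.simps)
qed

lemma sum_digit_eq_digit_sum: "2 \<le> p \<Longrightarrow> e < p ^ N \<Longrightarrow> (\<Sum>j<N. digit p e j) = digit_sum p e"
proof (induct N arbitrary: e)
  case (Suc N)
  have "digit p e (Suc j) = digit p (e div p) j" for j
    by (simp add: digit_def div_mult2_eq)
  moreover have "e div p < p ^ N" using Suc.prems by (simp add: div_less_iff_less_mult mult.commute)
  ultimately show ?case
    using Suc digit_sum_rec[of p e] by (simp add: sum.lessThan_Suc_shift digit_def del: sum.lessThan_Suc)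
qed simp

lemma digit_sum_add_mult_power:
  "2 \<le> p \<Longrightarrow> r < p ^ N \<Longrightarrow> digit_sum p (r + p ^ N * t) = digit_sum p r + digit_sum p t"
proof (induct N arbitrary: r)
  case (Suc N)
  have e: "r + p ^ Suc N * t = r + (p ^ N * t) * p" by (simp add: mult_ac)
  have "r div p < p ^ N" using Suc.prems by (simp add: div_less_iff_less_mult mult.commute)
  moreover have "(r + p ^ Suc N * t) mod p = r mod p" unfolding e by (rule mod_mult_self1)
  moreover have "(r + p ^ Suc N * t) div p = r div p + p ^ N * t" unfolding e using Suc.prems by simp
  ultimately show ?case
    using Suc digit_sum_rec[of p "r + p ^ Suc N * t"] digit_sum_rec[of p r] by simp
qed simp

text \<open>Carries only lower the digit sum.\<close>

lemma digit_sum_add_le: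
  assumes p: "2 \<le> p" shows "digit_sum p (a + b) \<le> digit_sum p a + digit_sum p b"
proof (induction "a + b" arbitrary: a b rule: less_induct)
  case less
  have IH: "digit_sum p (a' + b') \<le> digit_sum p a' + digit_sum p b'" if "a' + b' < a + b" for a' b'
    using less that by blast
  show ?case
  proof (cases "a + b = 0")
    case False
    define c where "c = (a mod p + b mod p) div p"
    have div: "(a + b) div p = a div p + b div p + c"
      unfolding c_def by (rule div_add1_eq)
    have mod: "(a + b) mod p + p * c = a mod p + b mod p"
      unfolding c_def mod_add_eq[where a = a and b = b and c = p, symmetric] by (rule mod_mult_div_eq)
    have lt: "(a + b) div p < a + b" using False p by simp
    have "digit_sum p ((a + b) div p) \<le> digit_sum p (a div p + b div p) + digit_sum p c"
      using IH[of "a div p + b div p" c] lt by (simp add: div)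
    moreover have "digit_sum p (a div p + b div p) \<le> digit_sum p (a div p) + digit_sum p (b div p)"
      using IH[of "a div p" "b div p"] lt div by simp
    moreover have "c \<le> p * c" using p by simp
    ultimately show ?thesis
      using digit_sum_rec[OF p, of "a + b"] digit_sum_rec[OF p, of a] digit_sum_rec[OF p, of b]
        digit_sum_le[of p c] mod by linarith
  qed simp
qed

lemma digit_sum_redexp_le:
  assumes p: "2 \<le> p" and n: "1 \<le> n"
  shows "digit_sum p (redexp (p ^ n) e) \<le> digit_sum p e"
proof (induct e rule: less_induct)
  case (less e)
  let ?q = "p ^ n"
  have q: "2 \<le> ?q" using power_ge_2[OF p n] .
  show ?case
  proof (cases "e < ?q")
    case True then show ?thesis by (simp add: redexp_small)
  next
    case False
    define r t where "r = e mod ?q" and "t = e div ?q"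
    have e: "e = r + ?q * t" unfolding r_def t_def by simp
    have rq: "r < ?q" unfolding r_def using q by (intro mod_less_divisor) linarith
    have "t \<noteq> 0" using False p by (simp add: t_def div_eq_0_iff)
    then have "t < ?q * t" using q by simp
    then have lt: "r + t < e" using e by linarith
    have "[e = r + 1 * t] (mod (?q - 1))"
      unfolding e using q by (intro cong_add cong_mult cong_refl cong_self_one) simp
    then have "redexp ?q e = redexp ?q (r + t)"
      using q \<open>t \<noteq> 0\<close> False by (intro redexp_cong) simp_all
    then have "digit_sum p (redexp ?q e) \<le> digit_sum p (r + t)" using less[OF lt] by simp
    also have "\<dots> \<le> digit_sum p r + digit_sum p t" by (rule digit_sum_add_le[OF p])
    also have "\<dots> = digit_sum p e"
      using digit_sum_add_mult_power[OF p rq, of t] e by simp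
    finally show ?thesis .
  qed
qed

declare Mval.simps [simp del]

lemma Mval_below: "i < n + k \<Longrightarrow> Mval p n k i j = 2 * i - 1"
  by (subst Mval.simps) simp

lemma less_power_Suc_self:
  assumes p: "2 \<le> p" shows "e < p ^ Suc e"
proof -
  have "e < 2 ^ e" by (rule less_exp)
  also have "(2::nat) ^ e \<le> p ^ e" by (rule power_mono[OF p]) simp
  also have "p ^ e \<le> p ^ Suc e" using p by simp
  finally show ?thesis .
qed

lemma MS_map_redexp_le_MT:
  assumes p: "2 \<le> p" and n: "1 \<le> n" and ks: "\<And>a i. (a, i) \<in> Poly_Mapping.keys m \<Longrightarrow> i < n + k"
  shows "MS p n k (Poly_Mapping.map (redexp (p ^ n)) m) \<le> MT p m"
proof -
  let ?q = "p ^ n"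
  have q: "2 \<le> ?q" using power_ge_2[OF p n] .
  have "(\<Sum>j<n. digit p (redexp ?q e) j * Mval p n k i j) \<le> (2 * i - 1) * (\<Sum>j\<le>e. digit p e j)"
    if "i < n + k" for e i
  proof -
    have "(\<Sum>j<n. digit p (redexp ?q e) j * Mval p n k i j) = (\<Sum>j<n. digit p (redexp ?q e) j) * (2 * i - 1)"
      using that by (simp add: Mval_below sum_distrib_right)
    also have "(\<Sum>j<n. digit p (redexp ?q e) j) = digit_sum p (redexp ?q e)"
      by (rule sum_digit_eq_digit_sum[OF p redexp_less[OF q]])
    also have "\<dots> \<le> digit_sum p e"
      by (rule digit_sum_redexp_le[OF p n])
    also have "digit_sum p e = (\<Sum>j\<le>e. digit p e j)"
      unfolding lessThan_Suc_atMost[symmetric]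
      by (rule sum_digit_eq_digit_sum[OF p less_power_Suc_self[OF p], symmetric])
    finally show ?thesis by (simp add: mult.commute)
  qed
  then show ?thesis
    unfolding MS_def MT_def keys_map_redexp[OF q] using ks
    by (intro sum_mono) (auto simp: lookup_map_redexp[OF q])
qed

lemma red_mem_filt:
  assumes p: "2 \<le> p" and n: "1 \<le> n" and x: "x \<in> filt (CT n k) (MT p) s w"
  shows "red (p ^ n) x \<in> filt (CS p n k) (MS p n k) s w"
  unfolding filt_def
proof (intro CollectI conjI ballI)
  have q: "2 \<le> p ^ n" using power_ge_2[OF p n] .
  show "red (p ^ n) x \<in> CS p n k s" using red_CT_in_CS[OF q] x unfolding filt_def by blast
  fix m' assume "m' \<in> Poly_Mapping.keys (red (p ^ n) x)"
  then obtain m where m: "m \<in> Poly_Mapping.keys x" and m': "m' = Poly_Mapping.map (redexp (p ^ n)) m"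
    using keys_red_subset by blast
  have "\<And>a i. (a, i) \<in> Poly_Mapping.keys m \<Longrightarrow> i < n + k"
    using x m unfolding filt_def CT_def by fastforce
  then have "MS p n k m' \<le> MT p m" unfolding m' by (rule MS_map_redexp_le_MT[OF p n])
  then show "int (MS p n k m') \<le> w" using x m unfolding filt_def by fastforce
qed

section \<open>Filtered cochain maps and the May spectral sequence\<close>

definition filtered_cochain_map ::
  "(nat \<Rightarrow> 'a::comm_ring_1 coch set) \<Rightarrow> (mono \<Rightarrow> nat) \<Rightarrow> (nat \<Rightarrow> 'a coch \<Rightarrow> 'a coch) \<Rightarrow>
   (nat \<Rightarrow> 'a coch set) \<Rightarrow> (mono \<Rightarrow> nat) \<Rightarrow> (nat \<Rightarrow> 'a coch \<Rightarrow> 'a coch) \<Rightarrow>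
   ('a coch \<Rightarrow> 'a coch) \<Rightarrow> bool" where
  "filtered_cochain_map C M d C' M' d' f \<longleftrightarrow> additive f \<and>
     (\<forall>s w x. x \<in> filt C M s w \<longrightarrow> f x \<in> filt C' M' s w) \<and>
     (\<forall>s x. x \<in> C s \<longrightarrow> f (d s x) = d' s (f x))"

lemma filtered_cochain_map_ZZ:
  assumes "filtered_cochain_map C M d C' M' d' f" and "x \<in> ZZ C M d r s w"
  shows "f x \<in> ZZ C' M' d' r s w"
  using assms unfolding filtered_cochain_map_def ZZ_def filt_def by (auto 0 4)

lemma filtered_cochain_map_BB:
  assumes f: "filtered_cochain_map C M d C' M' d' f" and y: "y \<in> BB C M d r s w"
  shows "f y \<in> BB C' M' d' r s w"
proof -
  have add: "additive f" using f by (simp add: filtered_cochain_map_def)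
  obtain u z where y: "y = u + z" and u: "u \<in> ZZ C M d (r - 1) s (w - 1)"
    and z: "z = 0 \<or> (\<exists>s' v. s = Suc s' \<and> v \<in> ZZ C M d (r - 1) s' (w + int r - 1) \<and> z = d s' v)"
    using y unfolding BB_def by blast
  have "f z = 0 \<or> (\<exists>s' v. s = Suc s' \<and> v \<in> ZZ C' M' d' (r - 1) s' (w + int r - 1) \<and> f z = d' s' v)"
  proof (cases "z = 0")
    case True then show ?thesis using additive.zero[OF add] by simp
  next
    case False
    then obtain s' v where "s = Suc s'" "v \<in> ZZ C M d (r - 1) s' (w + int r - 1)" "z = d s' v"
      using z by blast
    moreover have "v \<in> C s'" using \<open>v \<in> ZZ C M d (r - 1) s' (w + int r - 1)\<close>
      unfolding ZZ_def filt_def by blast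
    ultimately show ?thesis using f filtered_cochain_map_ZZ[OF f]
      unfolding filtered_cochain_map_def by blast
  qed
  moreover have "f y = f u + f z" unfolding y by (rule additive.add[OF add])
  ultimately show ?thesis using filtered_cochain_map_ZZ[OF f u] unfolding BB_def by blast
qed

lemma filtered_cochain_map_inf_cocycle:
  assumes f: "filtered_cochain_map C M d C' M' d' f" and x: "inf_cocycle C M d r s w x"
  shows "inf_cocycle C' M' d' r s w (f x)"
  unfolding inf_cocycle_def
proof (intro conjI allI impI)
  show "f x \<in> ZZ C' M' d' r s w"
    using x filtered_cochain_map_ZZ[OF f] unfolding inf_cocycle_def by blast
  fix r' assume "r \<le> r'"
  then obtain z where "z \<in> ZZ C M d r' s w" "x - z \<in> BB C M d r s w"
    using x unfolding inf_cocycle_def by blast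
  moreover have "f (x - z) = f x - f z"
    using f by (simp add: filtered_cochain_map_def additive.diff)
  ultimately show "\<exists>z\<in>ZZ C' M' d' r' s w. f x - z \<in> BB C' M' d' r s w"
    using filtered_cochain_map_ZZ[OF f] filtered_cochain_map_BB[OF f] by metis
qed

lemma red_filtered_cochain_map:
  assumes n: "1 \<le> n"
  shows "filtered_cochain_map (CT n k) (MT (CARD('p))) (dT (CARD('p)) k)
    (CS (CARD('p)) n k) (MS (CARD('p)) n k) (dS (CARD('p)) n k)
    (red (CARD('p::prime_card) ^ n) :: 'p mod_ring coch \<Rightarrow> 'p mod_ring coch)"
proof -
  have "\<forall>s w x. x \<in> filt (CT n k) (MT CARD('p)) s w \<longrightarrow>
      red (CARD('p) ^ n) x \<in> (filt (CS CARD('p) n k) (MS CARD('p) n k) s w :: 'p mod_ring coch set)"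
    using red_mem_filt[OF prime_card_ge_2 n] by blast
  moreover have "\<forall>s x. x \<in> CT n k s \<longrightarrow>
      red (CARD('p) ^ n) (dT CARD('p) k s x) = dS CARD('p) n k s (red (CARD('p) ^ n) (x :: 'p mod_ring coch))"
    using red_dT_eq_dS_red[OF n] by blast
  ultimately show ?thesis
    unfolding filtered_cochain_map_def by (simp add: additive_def red_add)
qed

lemma map_redexp_single:
  "2 \<le> q \<Longrightarrow> Poly_Mapping.map (redexp q) (Poly_Mapping.single v e) = Poly_Mapping.single v (redexp q e)"
  by (rule map_single) simp

lemma map_redexp_add_single:
  assumes q: "2 \<le> q" and vw: "v \<noteq> w"
  shows "Poly_Mapping.map (redexp q) (Poly_Mapping.single v a + Poly_Mapping.single w b) =
    Poly_Mapping.single v (redexp q a) + Poly_Mapping.single w (redexp q b)"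
proof (rule poly_mapping_eqI)
  fix u
  show "Poly_Mapping.lookup (Poly_Mapping.map (redexp q) (Poly_Mapping.single v a + Poly_Mapping.single w b)) u =
      Poly_Mapping.lookup (Poly_Mapping.single v (redexp q a) + Poly_Mapping.single w (redexp q b)) u"
    using q vw by (cases "u = v"; cases "u = w") (auto simp: lookup_map_redexp lookup_add lookup_single)
qed

lemma red_hcoch:
  assumes p: "2 \<le> p" and n: "1 \<le> n"
  shows "red (p ^ n) (hcoch p i j :: 'a::comm_ring_1 coch) = hcoch p i (j mod n)"
proof -
  have q: "2 \<le> p ^ n" using power_ge_2[OF p n] .
  have "redexp (p ^ n) (1 * p ^ j) = 1 * p ^ (j mod n)" by (rule redexp_digit_power[OF p n]) (use p in simp)
  then show ?thesis unfolding hcoch_def var_power red_single map_redexp_single[OF q] by simp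
qed

lemma red_bcoch:
  assumes p: "2 \<le> p" and n: "1 \<le> n"
  shows "red (p ^ n) (bcoch p i j :: 'a::comm_ring_1 coch) = bcoch p i (j mod n)"
proof -
  have q: "2 \<le> p ^ n" using power_ge_2[OF p n] .
  have b: "(bcoch p i j' :: 'a coch) = (\<Sum>m\<in>{1..<p}. Poly_Mapping.single
      (Poly_Mapping.single (0, i) (m * p ^ j') + Poly_Mapping.single (1, i) ((p - m) * p ^ j'))
      (of_nat ((p choose m) div p)))" for j'
    unfolding bcoch_def bpoly_def const_mult_var_powers by simp
  have "redexp (p ^ n) (m * p ^ j) = m * p ^ (j mod n)"
    and "redexp (p ^ n) ((p - m) * p ^ j) = (p - m) * p ^ (j mod n)" if "m \<in> {1..<p}" for m
    using that by (intro redexp_digit_power[OF p n]; simp)+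
  then show ?thesis
    unfolding b red_sum red_single by (intro sum.cong refl) (simp add: map_redexp_add_single[OF q])
qed

theorem theorem4p4:
  fixes n k :: nat
  assumes "odd CARD('p::prime_card)" and "n \<ge> 1" and "k \<ge> 1"
  shows
    "(\<forall>s (x :: 'p mod_ring coch). x \<in> CT n k s \<longrightarrow>
        red (CARD('p) ^ n) x \<in> CS (CARD('p)) n k s \<and>
        red (CARD('p) ^ n) (dT (CARD('p)) k s x) = dS (CARD('p)) n k s (red (CARD('p) ^ n) x))
   \<and> (\<forall>r\<ge>1. \<forall>s w.
        red (CARD('p) ^ n) ` ZZ (CT n k) (MT (CARD('p))) (dT (CARD('p)) k) r s w
          \<subseteq> (ZZ (CS (CARD('p)) n k) (MS (CARD('p)) n k) (dS (CARD('p)) n k) r s w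
               :: 'p mod_ring coch set)
      \<and> red (CARD('p) ^ n) ` BB (CT n k) (MT (CARD('p))) (dT (CARD('p)) k) r s w
          \<subseteq> (BB (CS (CARD('p)) n k) (MS (CARD('p)) n k) (dS (CARD('p)) n k) r s w
               :: 'p mod_ring coch set))
   \<and> (\<forall>i j. k \<le> i \<and> i < n + k \<longrightarrow>
        red (CARD('p) ^ n) (hcoch (CARD('p)) i j :: 'p mod_ring coch) = hcoch (CARD('p)) i (j mod n)
      \<and> red (CARD('p) ^ n) (bcoch (CARD('p)) i j :: 'p mod_ring coch) = bcoch (CARD('p)) i (j mod n))
   \<and> (\<forall>r\<ge>1. \<forall>s w (x :: 'p mod_ring coch).
        inf_cocycle (CT n k) (MT (CARD('p))) (dT (CARD('p)) k) r s w x \<longrightarrow>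
        inf_cocycle (CS (CARD('p)) n k) (MS (CARD('p)) n k) (dS (CARD('p)) n k) r s w
          (red (CARD('p) ^ n) x))"
proof -
  have n: "1 \<le> n" using assms(2) by simp
  have p: "2 \<le> CARD('p)" by (rule prime_card_ge_2)
  have q: "2 \<le> CARD('p) ^ n" using power_ge_2[OF p n] .
  note red_map = red_filtered_cochain_map[OF n, where k = k and 'p = 'p]
  show ?thesis
    by (intro conjI allI impI image_subsetI red_CT_in_CS[OF q] red_dT_eq_dS_red[OF n]
        filtered_cochain_map_ZZ[OF red_map] filtered_cochain_map_BB[OF red_map]
        filtered_cochain_map_inf_cocycle[OF red_map] red_hcoch[OF p n] red_bcoch[OF p n])
      assumption+
qed

end
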